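(* For any $s\in\mathbb R$ and any $a,b\ge0$, $$\lim_{n\to\infty}\Biggl(\sum_{i=0}^n\binom ni^sa^ib^{n-i}\Biggr)^{1/n}=\begin{cases}(a^{1/s}+b^{1/s})^s&\text{if }s>0,\\ \max\{a,b\}&\text{if }s\le0.\end{cases}$$
   Context: The convention $0^0=1$ is used in the terms $a^ib^{n-i}$. *)

theory Defs
  imports Complex_Main
begin

end

theory Submission
  imports Defs "HOL-Real_Asymp.Real_Asymp"
begin

text \<open>
  In both cases the \<open>n\<close>-th power of the claimed limit \<open>L\<close> bounds the \<open>n+1\<close> terms of the sum
  from above and the largest term from below, up to a factor polynomial in \<open>n\<close>, and such
  factors disappear under the \<open>n\<close>-th root. For \<open>s > 0\<close> write \<open>a = x\<^sup>s\<close>, \<open>b = y\<^sup>s\<close>: the terms are the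
  \<open>s\<close>-th powers of the binomial terms of \<open>(x + y)\<^sup>n\<close>, the largest of which is at least the
  average \<open>(x + y)\<^sup>n / (n + 1)\<close>. For \<open>s \<le> 0\<close> the binomial weights are at most \<open>1\<close>, and the
  extreme terms \<open>i = 0\<close>, \<open>i = n\<close> are \<open>b\<^sup>n\<close> and \<open>a\<^sup>n\<close>.
\<close>

lemma power_powr:
  fixes x s :: real
  assumes "x \<ge> 0"
  shows "(x ^ n) powr s = (x powr s) ^ n"
  by (induction n) (simp_all add: assms powr_mult)

lemma power_powr_inverse:
  fixes L :: real
  assumes "L \<ge> 0" and "n \<ge> 1"
  shows "(L ^ n) powr (1 / real n) = L"
  using assms by (simp add: power_powr powr_powr flip: powr_realpow')

lemma nth_root_tendsto_of_polynomial_bounds: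
  fixes S :: "nat \<Rightarrow> real" and L r :: real
  assumes L: "L \<ge> 0"
    and upper: "\<And>n. n \<ge> 1 \<Longrightarrow> S n \<le> (real n + 1) * L ^ n"
    and lower: "\<And>n. n \<ge> 1 \<Longrightarrow> L ^ n \<le> (real n + 1) powr r * S n"
  shows "(\<lambda>n. S n powr (1 / real n)) \<longlonglongrightarrow> L"
proof (rule tendsto_sandwich)
  have "(\<lambda>n::nat. (real n + 1) powr (- r / real n)) \<longlonglongrightarrow> 1" by real_asymp
  then show "(\<lambda>n::nat. (real n + 1) powr (- r / real n) * L) \<longlonglongrightarrow> L"
    using tendsto_mult_right[of _ 1 _ L] by simp
  have "(\<lambda>n::nat. (real n + 1) powr (1 / real n)) \<longlonglongrightarrow> 1" by real_asymp
  then show "(\<lambda>n::nat. (real n + 1) powr (1 / real n) * L) \<longlonglongrightarrow> L"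
    using tendsto_mult_right[of _ 1 _ L] by simp
  have S_nonneg: "S n \<ge> 0" if "n \<ge> 1" for n
  proof -
    have "0 \<le> (real n + 1) powr r * S n"
      using lower[OF that] L by (meson order_trans zero_le_power)
    then show ?thesis by (simp add: zero_le_mult_iff)
  qed
  show "\<forall>\<^sub>F n in sequentially. (real n + 1) powr (- r / real n) * L \<le> S n powr (1 / real n)"
    unfolding eventually_sequentially
  proof (intro exI allI impI)
    fix n :: nat assume n: "n \<ge> 1"
    have "(real n + 1) powr (- r) * L ^ n \<le> S n"
      using lower[OF n] by (simp add: powr_minus field_simps)
    then have "((real n + 1) powr (- r) * L ^ n) powr (1 / real n) \<le> S n powr (1 / real n)"
      using L by (intro powr_mono2) auto
    then show "(real n + 1) powr (- r / real n) * L \<le> S n powr (1 / real n)"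
      using L n by (simp add: powr_mult powr_powr power_powr_inverse)
  qed
  show "\<forall>\<^sub>F n in sequentially. S n powr (1 / real n) \<le> (real n + 1) powr (1 / real n) * L"
    unfolding eventually_sequentially
  proof (intro exI allI impI)
    fix n :: nat assume n: "n \<ge> 1"
    have "S n powr (1 / real n) \<le> ((real n + 1) * L ^ n) powr (1 / real n)"
      using S_nonneg[OF n] upper[OF n] by (intro powr_mono2) auto
    also have "\<dots> = (real n + 1) powr (1 / real n) * L"
      using L n by (simp add: powr_mult power_powr_inverse)
    finally show "S n powr (1 / real n) \<le> (real n + 1) powr (1 / real n) * L" .
  qed
qed

lemma sum_powr_le_card_mult_powr_sum:
  fixes f :: "'a \<Rightarrow> real" and s :: real
  assumes "finite A" and "\<And>i. i \<in> A \<Longrightarrow> f i \<ge> 0" and "s \<ge> 0"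
  shows "(\<Sum>i\<in>A. f i powr s) \<le> real (card A) * (sum f A) powr s"
proof (rule sum_bounded_above)
  fix i assume "i \<in> A"
  then have "f i \<le> sum f A"
    using assms by (intro member_le_sum) auto
  then show "f i powr s \<le> (sum f A) powr s"
    using assms \<open>i \<in> A\<close> by (intro powr_mono2) auto
qed

lemma powr_sum_le_card_powr_mult_sum_powr:
  fixes f :: "'a \<Rightarrow> real" and s :: real
  assumes "finite A" and "A \<noteq> {}" and nonneg: "\<And>i. i \<in> A \<Longrightarrow> f i \<ge> 0" and "s \<ge> 0"
  shows "(sum f A) powr s \<le> real (card A) powr s * (\<Sum>i\<in>A. f i powr s)"
proof -
  define m where "m = Max (f ` A)"
  have "m \<in> f ` A"
    unfolding m_def using assms by (intro Max_in) auto
  then obtain j where j: "j \<in> A" "f j = m" by blast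
  have "sum f A \<le> real (card A) * m"
    unfolding m_def using assms by (intro sum_bounded_above Max_ge) auto
  then have "(sum f A) powr s \<le> (real (card A) * m) powr s"
    using assms by (intro powr_mono2 sum_nonneg) auto
  also have "\<dots> = real (card A) powr s * f j powr s"
    using j nonneg by (simp add: powr_mult)
  also have "\<dots> \<le> real (card A) powr s * (\<Sum>i\<in>A. f i powr s)"
    using assms j by (intro mult_left_mono member_le_sum) auto
  finally show ?thesis .
qed

lemma binomial_powr_sum_nth_root_pos:
  fixes s a b :: real
  assumes a: "a \<ge> 0" and b: "b \<ge> 0" and s: "s > 0"
  shows "(\<lambda>n::nat. (\<Sum>i\<le>n. (real (n choose i)) powr s * a ^ i * b ^ (n - i)) powr (1 / real n))
           \<longlonglongrightarrow> (a powr (1 / s) + b powr (1 / s)) powr s"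
proof (rule nth_root_tendsto_of_polynomial_bounds[where r = s])
  define x where "x = a powr (1 / s)"
  define y where "y = b powr (1 / s)"
  have xy: "x \<ge> 0" "y \<ge> 0" unfolding x_def y_def by auto
  have "a = x powr s" "b = y powr s"
    unfolding x_def y_def using a b s by (auto simp: powr_powr)
  then have terms: "real (n choose i) powr s * a ^ i * b ^ (n - i)
      = (real (n choose i) * x ^ i * y ^ (n - i)) powr s" for n i
    using xy by (simp add: powr_mult power_powr)
  have binomial: "(\<Sum>i\<le>n. real (n choose i) * x ^ i * y ^ (n - i)) = (x + y) ^ n" for n
    by (simp add: binomial_ring mult.assoc)
  have power_sum: "((x + y) powr s) ^ n = ((x + y) ^ n) powr s" for n
    using xy by (simp add: power_powr)
  fix n :: nat
  show "(\<Sum>i\<le>n. real (n choose i) powr s * a ^ i * b ^ (n - i)) \<le> (real n + 1) * ((x + y) powr s) ^ n"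
    using sum_powr_le_card_mult_powr_sum[of "{..n}" "\<lambda>i. real (n choose i) * x ^ i * y ^ (n - i)" s]
    using xy s by (simp add: terms binomial power_sum add.commute)
  show "((x + y) powr s) ^ n \<le> (real n + 1) powr s * (\<Sum>i\<le>n. real (n choose i) powr s * a ^ i * b ^ (n - i))"
    using powr_sum_le_card_powr_mult_sum_powr[of "{..n}" "\<lambda>i. real (n choose i) * x ^ i * y ^ (n - i)" s]
    using xy s by (simp add: terms binomial power_sum add.commute)
  show "(x + y) powr s \<ge> 0" by simp
qed

lemma binomial_powr_sum_nth_root_nonpos:
  fixes s a b :: real
  assumes a: "a \<ge> 0" and b: "b \<ge> 0" and s: "s \<le> 0"
  shows "(\<lambda>n::nat. (\<Sum>i\<le>n. (real (n choose i)) powr s * a ^ i * b ^ (n - i)) powr (1 / real n))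
           \<longlonglongrightarrow> max a b"
proof (rule nth_root_tendsto_of_polynomial_bounds[where r = 0])
  fix n :: nat
  have nonneg: "real (n choose i) powr s * a ^ i * b ^ (n - i) \<ge> 0" for i
    using a b by simp
  have "real (n choose i) powr s * a ^ i * b ^ (n - i) \<le> max a b ^ n" if "i \<le> n" for i
  proof -
    have "real (n choose i) \<ge> 1"
      using that by (simp add: Suc_le_eq zero_less_binomial)
    then have "real (n choose i) powr s \<le> 1"
      using s that powr_mono[of s 0 "real (n choose i)"] by simp
    moreover have "a ^ i * b ^ (n - i) \<le> max a b ^ i * max a b ^ (n - i)"
      using a b by (intro mult_mono power_mono) auto
    ultimately show ?thesis
      using a b that mult_mono[of "real (n choose i) powr s" 1 "a ^ i * b ^ (n - i)"]
      by (simp add: mult.assoc flip: power_add)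
  qed
  then show "(\<Sum>i\<le>n. real (n choose i) powr s * a ^ i * b ^ (n - i)) \<le> (real n + 1) * max a b ^ n"
    using sum_bounded_above[of "{..n}" _ "max a b ^ n"] by (simp add: add.commute)
  obtain j where j: "j \<le> n" "max a b ^ n = real (n choose j) powr s * a ^ j * b ^ (n - j)"
  proof (cases "a \<le> b")
    case True
    then show ?thesis using that[of 0] by (simp add: max_def)
  next
    case False
    then show ?thesis using that[of n] by (simp add: max_def)
  qed
  have "max a b ^ n \<le> (\<Sum>i\<le>n. real (n choose i) powr s * a ^ i * b ^ (n - i))"
    unfolding j(2) using j(1) nonneg by (intro member_le_sum) auto
  then show "max a b ^ n \<le> (real n + 1) powr 0 * (\<Sum>i\<le>n. real (n choose i) powr s * a ^ i * b ^ (n - i))"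
    by simp
  show "max a b \<ge> 0" using a by simp
qed

theorem lemmaA4:
  fixes s a b :: real
  assumes "a \<ge> 0" and "b \<ge> 0"
  shows "(\<lambda>n::nat. (\<Sum>i\<le>n. (real (n choose i)) powr s * a ^ i * b ^ (n - i)) powr (1 / real n))
           \<longlonglongrightarrow> (if s > 0 then (a powr (1 / s) + b powr (1 / s)) powr s else max a b)"
  using binomial_powr_sum_nth_root_pos[OF assms] binomial_powr_sum_nth_root_nonpos[OF assms]
  by auto

end
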